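(* A shift space $X$ is dendric if and only if, for every $n\in\mathbb{N}$, the graph $G^L_n(X)$ is acyclic for the labeling and connected; equivalently, if and only if, for every $n\in\mathbb{N}$, the graph $G^R_n(X)$ is acyclic for the labeling and connected.
   Context: $X\subseteq\mathcal{A}^{\mathbb{Z}}$ is a shift space over a finite alphabet $\mathcal{A}$ with language $\mathcal{L}(X)$, $\mathcal{L}_n(X)$ its words of length $n$. For $v\in\mathcal{L}(X)$, $E^L_X(v)=\{a:av\in\mathcal{L}(X)\}$, $E^R_X(v)=\{b:vb\in\mathcal{L}(X)\}$, and $\mathcal{E}_X(v)$ is the bipartite graph whose vertices are the disjoint union of $\{a^L:a\in E^L_X(v)\}$ and $\{b^R:b\in E^R_X(v)\}$, with an edge $\{a^L,b^R\}$ whenever $avb\in\mathcal{L}(X)$. $X$ is dendric if $\mathcal{E}_X(v)$ is a tree for every $v\in\mathcal{L}(X)$. $G^L_n(X)$ (resp. $G^R_n(X)$) is the multigraph with labeled edges on vertex set $\mathcal{A}$ having, for each $v\in\mathcal{L}_n(X)$ and each pair of distinct $a,b\in E^L_X(v)$ (resp. $E^R_X(v)$), an edge labeled $v$ between $a$ and $b$. Acyclic for the labeling: every simple cycle uses only edges with a single label. *)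

theory Defs
  imports Main
begin

definition shift :: "(int \<Rightarrow> 'a) \<Rightarrow> (int \<Rightarrow> 'a)" where
  "shift x = (\<lambda>i. x (i + 1))"

text \<open>Closed in the product topology of discrete spaces: x is in the closure of X
  iff every central cylinder of x meets X.\<close>
definition shift_space :: "(int \<Rightarrow> 'a::finite) set \<Rightarrow> bool" where
  "shift_space X \<longleftrightarrow>
     shift ` X = X \<and>
     (\<forall>x. (\<forall>n::nat. \<exists>y\<in>X. \<forall>i. \<bar>i\<bar> \<le> int n \<longrightarrow> y i = x i) \<longrightarrow> x \<in> X)"

definition factor_at :: "(int \<Rightarrow> 'a) \<Rightarrow> int \<Rightarrow> nat \<Rightarrow> 'a list" where
  "factor_at x i n = map (\<lambda>k. x (i + int k)) [0..<n]"

definition lang :: "(int \<Rightarrow> 'a) set \<Rightarrow> 'a list set" where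
  "lang X = {w. \<exists>x\<in>X. \<exists>i. w = factor_at x i (length w)}"

definition lang_n :: "(int \<Rightarrow> 'a) set \<Rightarrow> nat \<Rightarrow> 'a list set" where
  "lang_n X n = {w \<in> lang X. length w = n}"

definition ext_L :: "(int \<Rightarrow> 'a) set \<Rightarrow> 'a list \<Rightarrow> 'a set" where
  "ext_L X v = {a. a # v \<in> lang X}"

definition ext_R :: "(int \<Rightarrow> 'a) set \<Rightarrow> 'a list \<Rightarrow> 'a set" where
  "ext_R X v = {b. v @ [b] \<in> lang X}"

definition adj :: "'v set set \<Rightarrow> ('v \<times> 'v) set" where
  "adj E = {(a, b). {a, b} \<in> E}"

definition sgraph_connected :: "'v set \<Rightarrow> 'v set set \<Rightarrow> bool" where
  "sgraph_connected V E \<longleftrightarrow> (\<forall>a\<in>V. \<forall>b\<in>V. (a, b) \<in> (adj E)\<^sup>*)"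

definition sgraph_has_cycle :: "'v set set \<Rightarrow> bool" where
  "sgraph_has_cycle E \<longleftrightarrow>
     (\<exists>vs. length vs \<ge> 3 \<and> distinct vs \<and>
        (\<forall>i < length vs. {vs ! i, vs ! ((i + 1) mod length vs)} \<in> E))"

definition is_tree :: "'v set \<Rightarrow> 'v set set \<Rightarrow> bool" where
  "is_tree V E \<longleftrightarrow> sgraph_connected V E \<and> \<not> sgraph_has_cycle E"

definition ext_vertices :: "(int \<Rightarrow> 'a) set \<Rightarrow> 'a list \<Rightarrow> ('a + 'a) set" where
  "ext_vertices X v = Inl ` ext_L X v \<union> Inr ` ext_R X v"

definition ext_edges :: "(int \<Rightarrow> 'a) set \<Rightarrow> 'a list \<Rightarrow> ('a + 'a) set set" where
  "ext_edges X v = {{Inl a, Inr b} | a b.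
      a \<in> ext_L X v \<and> b \<in> ext_R X v \<and> a # v @ [b] \<in> lang X}"

definition dendric :: "(int \<Rightarrow> 'a) set \<Rightarrow> bool" where
  "dendric X \<longleftrightarrow> (\<forall>v \<in> lang X. is_tree (ext_vertices X v) (ext_edges X v))"

text \<open>An edge of a labeled multigraph is a pair (label, {a,b}) with a \<noteq> b;
  distinct pairs are distinct edges (there is one edge per label and pair).\<close>

definition GL :: "(int \<Rightarrow> 'a) set \<Rightarrow> nat \<Rightarrow> ('a list \<times> 'a set) set" where
  "GL X n = {(v, {a, b}) | v a b. v \<in> lang_n X n \<and> a \<in> ext_L X v \<and> b \<in> ext_L X v \<and> a \<noteq> b}"

definition GR :: "(int \<Rightarrow> 'a) set \<Rightarrow> nat \<Rightarrow> ('a list \<times> 'a set) set" where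
  "GR X n = {(v, {a, b}) | v a b. v \<in> lang_n X n \<and> a \<in> ext_R X v \<and> b \<in> ext_R X v \<and> a \<noteq> b}"

text \<open>Connected, with vertex set the whole alphabet (UNIV).\<close>
definition mgraph_connected :: "('l \<times> 'v set) set \<Rightarrow> bool" where
  "mgraph_connected G \<longleftrightarrow> (\<forall>a b. (a, b) \<in> {(x, y). \<exists>l. (l, {x, y}) \<in> G}\<^sup>*)"

definition simple_cycle :: "('l \<times> 'v set) set \<Rightarrow> 'v list \<Rightarrow> ('l \<times> 'v set) list \<Rightarrow> bool" where
  "simple_cycle G vs es \<longleftrightarrow>
     length vs \<ge> 2 \<and> length es = length vs \<and> distinct vs \<and> distinct es \<and>
     (\<forall>i < length vs. es ! i \<in> G \<and> snd (es ! i) = {vs ! i, vs ! ((i + 1) mod length vs)})"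

definition acyclic_for_labeling :: "('l \<times> 'v set) set \<Rightarrow> bool" where
  "acyclic_for_labeling G \<longleftrightarrow>
     (\<forall>vs es. simple_cycle G vs es \<longrightarrow>
        (\<forall>i < length es. \<forall>j < length es. fst (es ! i) = fst (es ! j)))"

end

theory Submission
  imports Defs
begin

(*
  For a word u of length n, two left extensions x, y of u are linked in the extension graph of u
  with the right vertices of a set B deleted exactly when x and y are linked in G^L_(n+1) by edges
  whose labels are not of the form ub with b in B, provided G^L_n is label-separated: no edge with
  label w joins two vertices already linked by edges with other labels. Indeed an edge of G^L_(n+1)
  labelled u'b projects to the edge of G^L_n labelled u', and label-separation of G^L_n keeps a
  walk inside the left extensions of u whenever it uses an edge with u' = u. Since the edges of one
  label form a clique, label-separation is the same as acyclicity for the labeling.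
  Taking B empty transfers connectivity between the extension graphs and G^L_(n+1); taking B = {b}
  turns a cycle of an extension graph through the right vertex b into a violation of label-separation
  of G^L_(n+1) at the label ub, and conversely. Induction on n gives the statement for the left graphs,
  and reversing all sequences exchanges left and right.
*)

section \<open>Paths and cycles in simple graphs\<close>

lemma rtrancl_distinct_path:
  assumes "(x, y) \<in> R\<^sup>*"
  shows "\<exists>vs. vs \<noteq> [] \<and> vs ! 0 = x \<and> vs ! (length vs - 1) = y \<and> distinct vs \<and>
           (\<forall>i. Suc i < length vs \<longrightarrow> (vs ! i, vs ! Suc i) \<in> R)"
  using assms
proof (induction rule: rtrancl_induct)
  case base
  show ?case by (rule exI[of _ "[x]"]) auto
next
  case (step y z)
  then obtain vs where vs: "vs \<noteq> []" "vs ! 0 = x" "vs ! (length vs - 1) = y" "distinct vs"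
    "\<forall>i. Suc i < length vs \<longrightarrow> (vs ! i, vs ! Suc i) \<in> R" by blast
  show ?case
  proof (cases "z \<in> set vs")
    case True
    then obtain j where "j < length vs" "vs ! j = z" by (auto simp: in_set_conv_nth)
    then show ?thesis using vs by (intro exI[of _ "take (Suc j) vs"]) auto
  next
    case False
    have "((vs @ [z]) ! i, (vs @ [z]) ! Suc i) \<in> R" if "Suc i < length (vs @ [z])" for i
    proof (cases "Suc i < length vs")
      case False
      then have "i = length vs - 1" using that by simp
      then show ?thesis using vs(1,3) step(2) by (simp add: nth_append)
    qed (use vs(5) in \<open>simp add: nth_append\<close>)
    then show ?thesis using vs False by (intro exI[of _ "vs @ [z]"]) (auto simp: nth_append)
  qed
qed

lemma rtrancl_chain:
  assumes "m \<le> n" and "\<And>i. m \<le> i \<Longrightarrow> i < n \<Longrightarrow> (f i, f (Suc i)) \<in> R"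
  shows "(f m, f n) \<in> R\<^sup>*"
  using assms(1)
proof (induction rule: dec_induct)
  case (step i)
  then show ?case using assms(2) by (meson rtrancl_into_rtrancl)
qed simp

definition sgraph_cycle :: "'v set set \<Rightarrow> 'v list \<Rightarrow> bool" where
  "sgraph_cycle E vs \<longleftrightarrow> length vs \<ge> 3 \<and> distinct vs \<and>
     (\<forall>i < length vs. {vs ! i, vs ! ((i + 1) mod length vs)} \<in> E)"

lemma sgraph_has_cycle_iff: "sgraph_has_cycle E \<longleftrightarrow> (\<exists>vs. sgraph_cycle E vs)"
  unfolding sgraph_has_cycle_def sgraph_cycle_def ..

lemma sym_adj: "sym (adj E)"
  unfolding adj_def sym_def by (simp add: insert_commute)

lemma sgraph_cycle_rotate:
  assumes cyc: "sgraph_cycle E vs"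
  shows "sgraph_cycle E (rotate n vs)"
proof -
  define k where "k = length vs"
  have k: "k > 0" and edge: "\<And>j. j < k \<Longrightarrow> {vs ! j, vs ! (Suc j mod k)} \<in> E"
    using cyc unfolding sgraph_cycle_def k_def by auto
  have "{rotate n vs ! i, rotate n vs ! (Suc i mod k)} \<in> E" if "i < k" for i
  proof -
    have "(n + Suc i mod k) mod k = Suc ((n + i) mod k) mod k"
      by (simp add: mod_Suc_eq mod_add_right_eq)
    then show ?thesis using that k edge[of "(n + i) mod k"] unfolding k_def by (simp add: nth_rotate)
  qed
  then show ?thesis using cyc unfolding sgraph_cycle_def k_def by simp
qed

lemma sgraph_cycle_path_around_last:
  assumes cyc: "sgraph_cycle E vs"
  shows "\<exists>x y. x \<noteq> y \<and> {last vs, x} \<in> E \<and> {y, last vs} \<in> E \<and>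
           (x, y) \<in> (adj {e \<in> E. last vs \<notin> e})\<^sup>*"
proof -
  define k where "k = length vs"
  have k: "k \<ge> 3" and dist: "distinct vs"
    and edge: "\<And>i. i < k \<Longrightarrow> {vs ! i, vs ! ((i + 1) mod k)} \<in> E"
    using cyc unfolding sgraph_cycle_def k_def by auto
  have "vs \<noteq> []" using k unfolding k_def by auto
  then have last: "last vs = vs ! (k - 1)" unfolding k_def by (simp add: last_conv_nth)
  have "(vs ! i, vs ! Suc i) \<in> adj {e \<in> E. last vs \<notin> e}" if "i < k - 2" for i
  proof -
    have "{vs ! i, vs ! Suc i} \<in> E" using edge[of i] that by simp
    moreover have "vs ! (k - 1) \<noteq> vs ! i" "vs ! (k - 1) \<noteq> vs ! Suc i"
      using that dist k unfolding k_def by (auto simp: nth_eq_iff_index_eq)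
    ultimately show ?thesis unfolding adj_def last by auto
  qed
  then have "(vs ! 0, vs ! (k - 2)) \<in> (adj {e \<in> E. last vs \<notin> e})\<^sup>*"
    by (intro rtrancl_chain[where f = "(!) vs"]) auto
  moreover have "vs ! 0 \<noteq> vs ! (k - 2)"
    using dist k unfolding k_def by (subst nth_eq_iff_index_eq) auto
  moreover have "{last vs, vs ! 0} \<in> E" using edge[of "k - 1"] k unfolding last by simp
  moreover have "{vs ! (k - 2), last vs} \<in> E" using edge[of "k - 2"] k
    unfolding last by (simp add: Suc_diff_Suc numeral_2_eq_2)
  ultimately show ?thesis by blast
qed

lemma sgraph_cycle_path_around:
  assumes cyc: "sgraph_cycle E vs" and c: "c \<in> set vs"
  shows "\<exists>x y. x \<noteq> y \<and> {c, x} \<in> E \<and> {y, c} \<in> E \<and> (x, y) \<in> (adj {e \<in> E. c \<notin> e})\<^sup>*"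
proof -
  obtain j where j: "j < length vs" "vs ! j = c" using c by (auto simp: in_set_conv_nth)
  define ws where "ws = rotate (Suc j) vs"
  have "ws \<noteq> []" using j unfolding ws_def by auto
  then have "last ws = ws ! (length vs - 1)" unfolding ws_def by (simp add: last_conv_nth)
  also have "\<dots> = vs ! ((Suc j + (length vs - 1)) mod length vs)"
    unfolding ws_def using j by (intro nth_rotate) simp
  also have "Suc j + (length vs - 1) = j + length vs" using j by simp
  finally show ?thesis
    using sgraph_cycle_path_around_last[OF sgraph_cycle_rotate[OF cyc, of "Suc j"]]
    unfolding ws_def using j by simp
qed

lemma sgraph_has_cycle_of_path:
  assumes p: "(x, y) \<in> (adj {e \<in> E. c \<notin> e})\<^sup>*" and xy: "x \<noteq> y"
    and cx: "{c, x} \<in> E" and yc: "{y, c} \<in> E"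
  shows "sgraph_has_cycle E"
proof -
  obtain ps where ps: "ps \<noteq> []" "ps ! 0 = x" "ps ! (length ps - 1) = y" "distinct ps"
    and step: "\<And>i. Suc i < length ps \<Longrightarrow> {ps ! i, ps ! Suc i} \<in> E \<and> c \<notin> {ps ! i, ps ! Suc i}"
    using rtrancl_distinct_path[OF p] unfolding adj_def by auto
  define m where "m = length ps"
  have "m \<noteq> 0" "m \<noteq> 1" using ps xy unfolding m_def by auto
  then have m: "m \<ge> 2" by linarith
  have "ps ! i \<noteq> c" if "i < m" for i
  proof (cases "Suc i < m")
    case True
    then show ?thesis using step[of i] unfolding m_def by auto
  next
    case False
    then have "Suc (i - 1) < m" "Suc (i - 1) = i" using that m by auto
    then show ?thesis using step[of "i - 1"] unfolding m_def by auto
  qed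
  then have c_notin: "c \<notin> set ps" unfolding m_def by (auto simp: in_set_conv_nth)
  define vs where "vs = ps @ [c]"
  have "{vs ! i, vs ! ((i + 1) mod length vs)} \<in> E" if i: "i < length vs" for i
  proof -
    consider "Suc i < m" | "Suc i = m" | "i = m" using i unfolding vs_def m_def by fastforce
    then show ?thesis
    proof cases
      case 1
      then show ?thesis using step[of i] unfolding vs_def m_def by (simp add: nth_append)
    next
      case 2
      then have "i = m - 1" by simp
      then show ?thesis using yc ps(1,3) unfolding vs_def m_def by (simp add: nth_append)
    next
      case 3
      then show ?thesis using cx ps(1,2) unfolding vs_def m_def by (simp add: nth_append)
    qed
  qed
  moreover have "length vs \<ge> 3" "distinct vs" using m ps(4) c_notin unfolding vs_def m_def by auto
  ultimately show ?thesis unfolding sgraph_has_cycle_iff sgraph_cycle_def by blast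
qed

lemma adj_rtrancl_image: "(a, b) \<in> (adj E)\<^sup>* \<Longrightarrow> (f a, f b) \<in> (adj (image f ` E))\<^sup>*"
proof (induction rule: rtrancl_induct)
  case (step y z)
  then have "{f y, f z} \<in> image f ` E" unfolding adj_def by (intro image_eqI[where x = "{y, z}"]) auto
  then have "(f y, f z) \<in> adj (image f ` E)" unfolding adj_def by simp
  with step.IH show ?case by (rule rtrancl_into_rtrancl)
qed simp

lemma sgraph_has_cycle_image:
  assumes "sgraph_has_cycle E" and "inj f"
  shows "sgraph_has_cycle (image f ` E)"
proof -
  obtain vs where cyc: "sgraph_cycle E vs" using assms(1) unfolding sgraph_has_cycle_iff by blast
  have "{map f vs ! i, map f vs ! ((i + 1) mod length vs)} \<in> image f ` E" if "i < length vs" for i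
  proof -
    have "(i + 1) mod length vs < length vs" using that by (cases vs) auto
    then have "{map f vs ! i, map f vs ! ((i + 1) mod length vs)} = f ` {vs ! i, vs ! ((i + 1) mod length vs)}"
      using that by simp
    then show ?thesis using cyc that unfolding sgraph_cycle_def by blast
  qed
  then have "sgraph_cycle (image f ` E) (map f vs)"
    using cyc inj_on_subset[OF assms(2)] unfolding sgraph_cycle_def by (simp add: distinct_map)
  then show ?thesis unfolding sgraph_has_cycle_iff by blast
qed

lemma is_tree_involution_image:
  assumes invol: "\<And>x. f (f x) = x" and tree: "is_tree V E"
  shows "is_tree (f ` V) (image f ` E)"
  unfolding is_tree_def
proof
  show "sgraph_connected (f ` V) (image f ` E)"
    unfolding sgraph_connected_def
  proof (intro ballI)
    fix p q assume "p \<in> f ` V" "q \<in> f ` V"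
    then obtain a b where "a \<in> V" "b \<in> V" "p = f a" "q = f b" by blast
    then show "(p, q) \<in> (adj (image f ` E))\<^sup>*"
      using tree adj_rtrancl_image[of a b E f] unfolding is_tree_def sgraph_connected_def by blast
  qed
  have "inj f" using invol by (metis injI)
  moreover have "image f ` image f ` E = E" using invol by (simp add: image_image)
  ultimately show "\<not> sgraph_has_cycle (image f ` E)"
    using tree sgraph_has_cycle_image[of "image f ` E" f] unfolding is_tree_def by auto
qed

section \<open>Labelled multigraphs\<close>

definition adj_avoiding :: "('l \<times> 'v set) set \<Rightarrow> 'l set \<Rightarrow> ('v \<times> 'v) set" where
  "adj_avoiding G L = {(x, y). \<exists>l. l \<notin> L \<and> (l, {x, y}) \<in> G}"

lemma mgraph_connected_iff: "mgraph_connected G \<longleftrightarrow> (\<forall>a b. (a, b) \<in> (adj_avoiding G {})\<^sup>*)"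
  unfolding mgraph_connected_def adj_avoiding_def by simp

definition label_separated :: "('l \<times> 'v set) set \<Rightarrow> bool" where
  "label_separated G \<longleftrightarrow>
     (\<forall>l x y. (l, {x, y}) \<in> G \<longrightarrow> x \<noteq> y \<longrightarrow> (x, y) \<notin> (adj_avoiding G {l})\<^sup>*)"

lemma acyclic_for_labeling_imp_label_separated:
  assumes acyc: "acyclic_for_labeling G"
  shows "label_separated G"
  unfolding label_separated_def
proof (intro allI impI notI)
  fix l x y
  assume e: "(l, {x, y}) \<in> G" and xy: "x \<noteq> y" and p: "(x, y) \<in> (adj_avoiding G {l})\<^sup>*"
  obtain vs where vs: "vs \<noteq> []" "vs ! 0 = x" "vs ! (length vs - 1) = y" "distinct vs"
    and step: "\<And>i. Suc i < length vs \<Longrightarrow> (vs ! i, vs ! Suc i) \<in> adj_avoiding G {l}"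
    using rtrancl_distinct_path[OF p] by blast
  define m where "m = length vs - 1"
  have len: "length vs = Suc m" using vs(1) unfolding m_def by auto
  have m: "m \<ge> 1" using vs xy len by (cases m) auto
  obtain lab where lab: "\<And>i. i < m \<Longrightarrow> lab i \<noteq> l \<and> (lab i, {vs ! i, vs ! Suc i}) \<in> G"
    using step len unfolding adj_avoiding_def by simp metis
  define es where "es = map (\<lambda>i. (lab i, {vs ! i, vs ! Suc i})) [0..<m] @ [(l, {y, x})]"
  have "inj_on (\<lambda>i. (lab i, {vs ! i, vs ! Suc i})) {0..<m}"
  proof (rule inj_onI)
    fix i j assume "i \<in> {0..<m}" "j \<in> {0..<m}"
      and eq: "(lab i, {vs ! i, vs ! Suc i}) = (lab j, {vs ! j, vs ! Suc j})"
    then have "(i = j \<or> i = Suc j) \<and> (j = i \<or> j = Suc i)"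
      using len by (auto simp: doubleton_eq_iff nth_eq_iff_index_eq[OF vs(4)])
    then show "i = j" by auto
  qed
  moreover have "(l, {y, x}) \<notin> (\<lambda>i. (lab i, {vs ! i, vs ! Suc i})) ` {0..<m}" using lab by fastforce
  ultimately have "distinct es" unfolding es_def by (simp add: distinct_map)
  moreover have "es ! i \<in> G \<and> snd (es ! i) = {vs ! i, vs ! ((i + 1) mod length vs)}"
    if "i < length vs" for i
  proof (cases "i < m")
    case True
    then show ?thesis using lab[OF True] len unfolding es_def by (auto simp: nth_append)
  next
    case False
    then have "i = m" using that len by auto
    then show ?thesis using e vs(2,3) len unfolding es_def m_def by (auto simp: nth_append insert_commute)
  qed
  ultimately have "simple_cycle G vs es"
    using len m vs(4) unfolding simple_cycle_def es_def by auto
  then have "fst (es ! 0) = fst (es ! m)"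
    using acyc len unfolding acyclic_for_labeling_def es_def by auto
  then show False using lab[of 0] m unfolding es_def by (auto simp: nth_append)
qed

definition label_cliques :: "('l \<times> 'v set) set \<Rightarrow> bool" where
  "label_cliques G \<longleftrightarrow> (\<forall>l a b c d x y. (l, {a, b}) \<in> G \<longrightarrow> (l, {c, d}) \<in> G \<longrightarrow>
     x \<in> {a, b} \<longrightarrow> y \<in> {c, d} \<longrightarrow> x \<noteq> y \<longrightarrow> (l, {x, y}) \<in> G)"

lemma label_separated_walk_returns:
  assumes sep: "label_separated G"
    and clique: "label_cliques G"
    and walk: "\<And>i. t \<le> i \<Longrightarrow> i < s \<Longrightarrow> (lab i, {v i, v (Suc i)}) \<in> G"
    and "t < s" and "lab t \<noteq> l"
    and start: "(l, {p, v t}) \<in> G" and stop: "(l, {v s, q}) \<in> G"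
  shows "\<exists>r. t < r \<and> r \<le> s \<and> v r = v t"
proof -
  define touches_l where "touches_l z \<longleftrightarrow> (\<exists>a b. (l, {a, b}) \<in> G \<and> z \<in> {a, b})" for z
  have ex: "\<exists>r. t < r \<and> touches_l (v r)" using \<open>t < s\<close> stop unfolding touches_l_def by blast
  have "touches_l (v t)" using start unfolding touches_l_def by blast
  define r where "r = (LEAST r. t < r \<and> touches_l (v r))"
  have r: "t < r" "touches_l (v r)" using LeastI_ex[OF ex] unfolding r_def by auto
  have "r \<le> s" using \<open>t < s\<close> stop unfolding r_def touches_l_def by (intro Least_le) blast
  have "(v i, v (Suc i)) \<in> adj_avoiding G {l}" if "t \<le> i" "i < r" for i
  proof -
    have "lab i \<noteq> l"
    proof (cases "i = t")
      case False
      then have "\<not> touches_l (v i)"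
        using not_less_Least[of i "\<lambda>r. t < r \<and> touches_l (v r)", folded r_def] that by auto
      then show ?thesis using walk[of i] that \<open>r \<le> s\<close> unfolding touches_l_def by auto
    qed (use \<open>lab t \<noteq> l\<close> in simp)
    then show ?thesis using walk[of i] that \<open>r \<le> s\<close> unfolding adj_avoiding_def by auto
  qed
  then have "(v t, v r) \<in> (adj_avoiding G {l})\<^sup>*"
    using r(1) by (intro rtrancl_chain[where f = v]) auto
  moreover have "(l, {v t, v r}) \<in> G" if "v t \<noteq> v r"
    using \<open>touches_l (v t)\<close> r(2) that clique unfolding touches_l_def label_cliques_def by metis
  ultimately have "v t = v r" using sep unfolding label_separated_def by blast
  then show ?thesis using r(1) \<open>r \<le> s\<close> by auto
qed

lemma label_separated_imp_acyclic_for_labeling: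
  assumes sep: "label_separated G"
    and clique: "label_cliques G"
  shows "acyclic_for_labeling G"
  unfolding acyclic_for_labeling_def
proof (intro allI impI)
  fix vs es i j
  assume cyc: "simple_cycle G vs es" and ij: "i < length es" "j < length es"
  define k where "k = length vs"
  define v where "v i = vs ! (i mod k)" for i
  define lab where "lab i = fst (es ! (i mod k))" for i
  have k: "k \<ge> 2" "length es = k" and dist: "distinct vs"
    using cyc unfolding simple_cycle_def k_def by auto
  have edge: "(lab i, {v i, v (Suc i)}) \<in> G" for i
  proof -
    have "i mod k < k" using k by simp
    then have "es ! (i mod k) \<in> G \<and> snd (es ! (i mod k)) = {vs ! (i mod k), vs ! ((i mod k + 1) mod k)}"
      using cyc unfolding simple_cycle_def k_def by blast
    moreover have "(i mod k + 1) mod k = Suc i mod k" by (simp add: mod_Suc_eq)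
    ultimately show ?thesis unfolding lab_def v_def by (metis prod.collapse)
  qed
  have "\<forall>t < k. lab t = lab 0"
  proof (rule ccontr)
    assume "\<not> (\<forall>t < k. lab t = lab 0)"
    then have ex: "\<exists>t. t < k \<and> lab t \<noteq> lab 0" by blast
    define t where "t = (LEAST t. t < k \<and> lab t \<noteq> lab 0)"
    have t: "t < k" "lab t \<noteq> lab 0" using LeastI_ex[OF ex] unfolding t_def by auto
    have t1: "t \<ge> 1" using t(2) by (cases t) auto
    then have "lab (t - 1) = lab 0"
      using not_less_Least[of "t - 1" "\<lambda>t. t < k \<and> lab t \<noteq> lab 0", folded t_def] t by auto
    moreover have "Suc (t - 1) = t" using t1 by simp
    ultimately have prev: "(lab 0, {v (t - 1), v t}) \<in> G" using edge[of "t - 1"] by simp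
    have "v k = v 0" unfolding v_def by simp
    then have stop: "(lab 0, {v k, v 1}) \<in> G" using edge[of 0] by simp
    obtain r where r: "t < r" "r \<le> k" "v r = v t"
      using label_separated_walk_returns[OF sep clique edge t prev stop] by blast
    have "r mod k \<noteq> t"
    proof (cases "r = k")
      case True
      then show ?thesis using t1 by simp
    next
      case False
      then show ?thesis using r by simp
    qed
    moreover have "r mod k < k" using k by simp
    ultimately show False using r(3) t(1) dist unfolding v_def k_def by (simp add: nth_eq_iff_index_eq)
  qed
  then have "lab i = lab j" using ij k by metis
  then show "fst (es ! i) = fst (es ! j)" using ij k unfolding lab_def by simp
qed

lemma simple_cycle_image:
  assumes "simple_cycle G vs es" and "inj h" and "\<And>e. snd (h e) = snd e"
  shows "simple_cycle (h ` G) vs (map h es)"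
  using assms unfolding simple_cycle_def by (auto simp: distinct_map intro: inj_on_subset[OF assms(2)])

lemma acyclic_for_labeling_relabel:
  assumes "\<And>l. f (f l) = l"
  shows "acyclic_for_labeling (apfst f ` G) \<longleftrightarrow> acyclic_for_labeling G"
proof -
  have apfst_invol: "apfst f (apfst f p) = p" for p using assms by (cases p) simp
  have invol: "apfst f ` apfst f ` H = H" for H by (simp add: image_image apfst_invol)
  have inj: "inj (apfst f)" using assms by (metis injI inj_apfst)
  have relabel: "acyclic_for_labeling (apfst f ` H)" if "acyclic_for_labeling H" for H
    unfolding acyclic_for_labeling_def
  proof (intro allI impI)
    fix vs es i j assume "simple_cycle (apfst f ` H) vs es" "i < length es" "j < length es"
    then have "fst (map (apfst f) es ! i) = fst (map (apfst f) es ! j)"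
      using that simple_cycle_image[of "apfst f ` H" vs es "apfst f"] inj invol
      unfolding acyclic_for_labeling_def by (metis length_map snd_apfst)
    then have "f (fst (es ! i)) = f (fst (es ! j))" using \<open>i < length es\<close> \<open>j < length es\<close> by simp
    then show "fst (es ! i) = fst (es ! j)" by (metis assms)
  qed
  show ?thesis using relabel[of G] relabel[of "apfst f ` G"] unfolding invol by blast
qed

lemma mgraph_connected_relabel: "mgraph_connected (apfst f ` G) \<longleftrightarrow> mgraph_connected G"
proof -
  have "{(x, y). \<exists>l. (l, {x, y}) \<in> apfst f ` G} = {(x, y). \<exists>l. (l, {x, y}) \<in> G}"
    by (force simp: image_iff)
  then show ?thesis unfolding mgraph_connected_def by simp
qed

lemma factor_at_length [simp]: "length (factor_at x i n) = n"
  by (simp add: factor_at_def)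

lemma factor_at_Suc_Cons: "factor_at x i (Suc n) = x i # factor_at x (i + 1) n"
  unfolding factor_at_def
  by (rule nth_equalityI) (auto simp del: upt_Suc simp: nth_Cons algebra_simps split: nat.splits)

lemma factor_at_Suc_snoc: "factor_at x i (Suc n) = factor_at x i n @ [x (i + int n)]"
  by (simp add: factor_at_def)

lemma in_lang_iff: "w \<in> lang X \<longleftrightarrow> (\<exists>x\<in>X. \<exists>i. w = factor_at x i (length w))"
  by (simp add: lang_def)

lemma lang_ConsD: "a # w \<in> lang X \<Longrightarrow> w \<in> lang X"
  unfolding in_lang_iff by (auto simp: factor_at_Suc_Cons)

lemma lang_snocD: "w @ [b] \<in> lang X \<Longrightarrow> w \<in> lang X"
  unfolding in_lang_iff by (auto simp: factor_at_Suc_snoc)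

lemma lang_extend_left:
  assumes "w \<in> lang X"
  shows "\<exists>a. a # w \<in> lang X"
proof -
  obtain x i where "x \<in> X" "w = factor_at x i (length w)" using assms unfolding in_lang_iff by auto
  then have "x (i - 1) # w = factor_at x (i - 1) (length (x (i - 1) # w))"
    by (simp add: factor_at_Suc_Cons)
  then show ?thesis using \<open>x \<in> X\<close> unfolding in_lang_iff by blast
qed

lemma lang_n_Suc_snoc:
  assumes "w \<in> lang_n X (Suc n)"
  obtains u b where "w = u @ [b]" "u \<in> lang_n X n"
proof -
  have "w \<noteq> []" using assms unfolding lang_n_def by auto
  then have "w = butlast w @ [last w]" by simp
  then show ?thesis using that assms lang_snocD[of "butlast w" "last w" X]
    unfolding lang_n_def by auto
qed

lemma ext_edges_iff: "e \<in> ext_edges X u \<longleftrightarrow> (\<exists>a b. e = {Inl a, Inr b} \<and> a # u @ [b] \<in> lang X)"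
proof -
  have "a \<in> ext_L X u \<and> b \<in> ext_R X u" if "a # u @ [b] \<in> lang X" for a b
    using that lang_snocD[of "a # u" b X] lang_ConsD[of a "u @ [b]" X] unfolding ext_L_def ext_R_def by simp
  then show ?thesis unfolding ext_edges_def by blast
qed

lemma doubleton_in_ext_edges_iff:
  "{p, q} \<in> ext_edges X u \<longleftrightarrow>
     (\<exists>a b. (p = Inl a \<and> q = Inr b \<or> p = Inr b \<and> q = Inl a) \<and> a # u @ [b] \<in> lang X)"
  unfolding ext_edges_iff by (auto simp: doubleton_eq_iff)

lemma doubleton_in_GL_iff:
  "(w, {x, y}) \<in> GL X n \<longleftrightarrow> w \<in> lang_n X n \<and> x \<in> ext_L X w \<and> y \<in> ext_L X w \<and> x \<noteq> y"
  unfolding GL_def by (auto simp: doubleton_eq_iff)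

lemma label_cliques_GL: "label_cliques (GL X n)"
  unfolding label_cliques_def doubleton_in_GL_iff by auto

lemma acyclic_for_labeling_GL_iff: "acyclic_for_labeling (GL X n) \<longleftrightarrow> label_separated (GL X n)"
  using acyclic_for_labeling_imp_label_separated label_separated_imp_acyclic_for_labeling[OF _ label_cliques_GL]
  by blast

section \<open>Extension graphs inside G^L_(n+1)\<close>

definition ext_edges_avoiding :: "(int \<Rightarrow> 'a) set \<Rightarrow> 'a list \<Rightarrow> 'a set \<Rightarrow> ('a + 'a) set set" where
  "ext_edges_avoiding X u B = {e \<in> ext_edges X u. e \<inter> Inr ` B = {}}"

lemma ext_edges_avoiding_empty [simp]: "ext_edges_avoiding X u {} = ext_edges X u"
  by (simp add: ext_edges_avoiding_def)

lemma ext_edges_avoiding_singleton: "ext_edges_avoiding X u {b} = {e \<in> ext_edges X u. Inr b \<notin> e}"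
  by (auto simp: ext_edges_avoiding_def)

definition common_right_ext :: "(int \<Rightarrow> 'a) set \<Rightarrow> 'a list \<Rightarrow> 'a set \<Rightarrow> ('a \<times> 'a) set" where
  "common_right_ext X u B = {(a, a'). \<exists>b. b \<notin> B \<and> a # u @ [b] \<in> lang X \<and> a' # u @ [b] \<in> lang X}"

lemma ext_path_imp_common_right_ext:
  assumes "(Inl x, z) \<in> (adj (ext_edges_avoiding X u B))\<^sup>*"
  shows "case z of
      Inl a \<Rightarrow> (x, a) \<in> (common_right_ext X u B)\<^sup>*
    | Inr b \<Rightarrow> b \<notin> B \<and> (\<exists>a. (x, a) \<in> (common_right_ext X u B)\<^sup>* \<and> a # u @ [b] \<in> lang X)"
  using assms
proof (induction rule: rtrancl_induct)
  case (step y z)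
  from step.hyps(2) obtain a b where ab: "y = Inl a \<and> z = Inr b \<or> y = Inr b \<and> z = Inl a"
    "a # u @ [b] \<in> lang X" "b \<notin> B"
    unfolding adj_def ext_edges_avoiding_def by (auto simp: doubleton_in_ext_edges_iff)
  then consider "y = Inl a" "z = Inr b" | "y = Inr b" "z = Inl a" by blast
  then show ?case
  proof cases
    case 1
    then show ?thesis using step.IH ab by auto
  next
    case 2
    then obtain a' where "(x, a') \<in> (common_right_ext X u B)\<^sup>*" "a' # u @ [b] \<in> lang X"
      using step.IH by auto
    moreover have "(a', a) \<in> common_right_ext X u B"
      using calculation ab unfolding common_right_ext_def by auto
    ultimately show ?thesis using 2 by (auto intro: rtrancl_into_rtrancl)
  qed
qed simp

lemma common_right_ext_imp_ext_path:
  assumes "(x, y) \<in> (common_right_ext X u B)\<^sup>*"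
  shows "(Inl x, Inl y) \<in> (adj (ext_edges_avoiding X u B))\<^sup>*"
  using assms
proof (induction rule: rtrancl_induct)
  case (step y z)
  then obtain b where "b \<notin> B" "y # u @ [b] \<in> lang X" "z # u @ [b] \<in> lang X"
    unfolding common_right_ext_def by auto
  then have "(Inl y, Inr b) \<in> adj (ext_edges_avoiding X u B)"
    "(Inr b, Inl z) \<in> adj (ext_edges_avoiding X u B)"
    unfolding adj_def ext_edges_avoiding_def by (auto simp: doubleton_in_ext_edges_iff)
  then show ?case using step.IH by (meson rtrancl_into_rtrancl)
qed simp

lemma ext_path_iff_common_right_ext:
  "(Inl x, Inl y) \<in> (adj (ext_edges_avoiding X u B))\<^sup>* \<longleftrightarrow> (x, y) \<in> (common_right_ext X u B)\<^sup>*"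
  using ext_path_imp_common_right_ext[of x "Inl y"] common_right_ext_imp_ext_path by auto

lemma common_right_ext_subset_GL_Suc:
  assumes "length u = n"
  shows "common_right_ext X u B \<subseteq> (adj_avoiding (GL X (Suc n)) ((\<lambda>b. u @ [b]) ` B))\<^sup>*"
proof clarify
  fix a a' assume "(a, a') \<in> common_right_ext X u B"
  then obtain b where b: "b \<notin> B" "a # u @ [b] \<in> lang X" "a' # u @ [b] \<in> lang X"
    unfolding common_right_ext_def by auto
  show "(a, a') \<in> (adj_avoiding (GL X (Suc n)) ((\<lambda>b. u @ [b]) ` B))\<^sup>*"
  proof (cases "a = a'")
    case False
    have "u @ [b] \<in> lang X" using lang_ConsD b(2) by fastforce
    then have "(u @ [b], {a, a'}) \<in> GL X (Suc n)"
      using b assms False unfolding doubleton_in_GL_iff lang_n_def ext_L_def by auto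
    then have "(a, a') \<in> adj_avoiding (GL X (Suc n)) ((\<lambda>b. u @ [b]) ` B)"
      using b(1) unfolding adj_avoiding_def by auto
    then show ?thesis by blast
  qed simp
qed

lemma label_separated_GL_eq:
  assumes "label_separated (GL X n)" "u \<in> lang_n X n" "x \<in> ext_L X u" "y \<in> ext_L X u"
    and "(x, y) \<in> (adj_avoiding (GL X n) {u})\<^sup>*"
  shows "x = y"
proof (rule ccontr)
  assume "x \<noteq> y"
  then have "(u, {x, y}) \<in> GL X n" using assms(2-4) by (simp add: doubleton_in_GL_iff)
  then show False using assms(1,5) \<open>x \<noteq> y\<close> unfolding label_separated_def by blast
qed

lemma GL_Suc_path_imp_common_right_ext:
  assumes sep: "label_separated (GL X n)" and u: "u \<in> lang_n X n"
    and x: "x \<in> ext_L X u" and y: "y \<in> ext_L X u"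
    and path: "(x, y) \<in> (adj_avoiding (GL X (Suc n)) ((\<lambda>b. u @ [b]) ` B))\<^sup>*"
  shows "(x, y) \<in> (common_right_ext X u B)\<^sup>*"
proof -
  let ?R = "common_right_ext X u B" and ?S = "adj_avoiding (GL X n) {u}"
  \<comment> \<open>p is the last vertex of the walk that is a left extension of u: an edge labelled u'b with
    u' \<noteq> u projects to an edge of G^L_n not labelled u, while by label-separation of G^L_n an edge
    labelled ub can only leave from p itself.\<close>
  have "\<exists>p \<in> ext_L X u. (x, p) \<in> ?R\<^sup>* \<and> (p, y) \<in> ?S\<^sup>*"
    using path
  proof (induction rule: rtrancl_induct)
    case (step z z')
    then obtain p where p: "p \<in> ext_L X u" "(x, p) \<in> ?R\<^sup>*" "(p, z) \<in> ?S\<^sup>*" by auto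
    from step.hyps(2) obtain w where w: "w \<notin> (\<lambda>b. u @ [b]) ` B" "(w, {z, z'}) \<in> GL X (Suc n)"
      unfolding adj_avoiding_def by auto
    then have wn: "w \<in> lang_n X (Suc n)" and zz': "z # w \<in> lang X" "z' # w \<in> lang X" "z \<noteq> z'"
      unfolding doubleton_in_GL_iff ext_L_def by auto
    obtain u' b where u': "w = u' @ [b]" "u' \<in> lang_n X n" using wn by (rule lang_n_Suc_snoc)
    have zu': "z \<in> ext_L X u'" "z' \<in> ext_L X u'"
      using zz' u'(1) lang_snocD[of "_ # u'"] unfolding ext_L_def by auto
    show ?case
    proof (cases "u' = u")
      case False
      then have "(z, z') \<in> ?S" using zu' u' zz' unfolding adj_avoiding_def doubleton_in_GL_iff by auto
      then show ?thesis using p by (meson rtrancl_into_rtrancl)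
    next
      case True
      then have "p = z" using label_separated_GL_eq[OF sep u p(1) _ p(3)] zu' by simp
      moreover have "(z, z') \<in> ?R" using w zz' u' True unfolding common_right_ext_def by auto
      ultimately show ?thesis using p zu' True by (meson rtrancl.rtrancl_refl rtrancl_into_rtrancl)
    qed
  qed (use x in auto)
  then obtain p where p: "p \<in> ext_L X u" "(x, p) \<in> ?R\<^sup>*" "(p, y) \<in> ?S\<^sup>*" by blast
  then show ?thesis using label_separated_GL_eq[OF sep u p(1) y p(3)] by simp
qed

lemma ext_path_iff_GL_Suc_path:
  assumes "label_separated (GL X n)" "u \<in> lang_n X n" "x \<in> ext_L X u" "y \<in> ext_L X u"
  shows "(Inl x, Inl y) \<in> (adj (ext_edges_avoiding X u B))\<^sup>* \<longleftrightarrow>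
    (x, y) \<in> (adj_avoiding (GL X (Suc n)) ((\<lambda>b. u @ [b]) ` B))\<^sup>*"
proof -
  have "length u = n" using assms(2) unfolding lang_n_def by simp
  then have "(common_right_ext X u B)\<^sup>* \<subseteq> (adj_avoiding (GL X (Suc n)) ((\<lambda>b. u @ [b]) ` B))\<^sup>*"
    by (rule rtrancl_subset_rtrancl[OF common_right_ext_subset_GL_Suc])
  then show ?thesis
    unfolding ext_path_iff_common_right_ext using GL_Suc_path_imp_common_right_ext[OF assms] by blast
qed

lemma ext_vertex_reaches_left:
  assumes "z \<in> ext_vertices X u"
  obtains a where "a \<in> ext_L X u" "(z, Inl a) \<in> (adj (ext_edges X u))\<^sup>*"
proof -
  consider a where "z = Inl a" "a \<in> ext_L X u" | b where "z = Inr b" "u @ [b] \<in> lang X"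
    using assms unfolding ext_vertices_def ext_R_def by auto
  then show ?thesis
  proof cases
    case (2 b)
    then obtain a where a: "a # u @ [b] \<in> lang X" using lang_extend_left by blast
    then have "a \<in> ext_L X u" using lang_snocD[of "a # u"] unfolding ext_L_def by simp
    moreover have "(z, Inl a) \<in> adj (ext_edges X u)"
      using a 2 unfolding adj_def by (auto simp: doubleton_in_ext_edges_iff)
    ultimately show ?thesis using that by blast
  qed (use that in blast)
qed

lemma ext_graph_connected_of_GL_Suc:
  assumes sep: "label_separated (GL X n)" and connS: "mgraph_connected (GL X (Suc n))"
    and u: "u \<in> lang_n X n"
  shows "sgraph_connected (ext_vertices X u) (ext_edges X u)"
  unfolding sgraph_connected_def
proof (intro ballI)
  let ?R = "adj (ext_edges X u)"
  fix p q assume p: "p \<in> ext_vertices X u" and q: "q \<in> ext_vertices X u"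
  obtain a where a: "a \<in> ext_L X u" "(p, Inl a) \<in> ?R\<^sup>*"
    using p by (rule ext_vertex_reaches_left)
  obtain c where c: "c \<in> ext_L X u" "(q, Inl c) \<in> ?R\<^sup>*"
    using q by (rule ext_vertex_reaches_left)
  have "(a, c) \<in> (adj_avoiding (GL X (Suc n)) {})\<^sup>*"
    using connS unfolding mgraph_connected_iff by blast
  then have "(Inl a, Inl c) \<in> ?R\<^sup>*" using ext_path_iff_GL_Suc_path[OF sep u a(1) c(1), of "{}"] by simp
  moreover have "(Inl c, q) \<in> ?R\<^sup>*" using sym_rtrancl[OF sym_adj] c(2) by (rule symD)
  ultimately show "(p, q) \<in> ?R\<^sup>*" using a(2) by (meson rtrancl_trans)
qed

lemma GL_Suc_connected_of_ext_graphs: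
  assumes sep: "label_separated (GL X n)" and conn: "mgraph_connected (GL X n)"
    and trees: "\<forall>u \<in> lang_n X n. sgraph_connected (ext_vertices X u) (ext_edges X u)"
  shows "mgraph_connected (GL X (Suc n))"
proof -
  have "adj_avoiding (GL X n) {} \<subseteq> (adj_avoiding (GL X (Suc n)) {})\<^sup>*"
  proof clarify
    fix p q assume "(p, q) \<in> adj_avoiding (GL X n) {}"
    then obtain u where "(u, {p, q}) \<in> GL X n" unfolding adj_avoiding_def by auto
    then have u: "u \<in> lang_n X n" and pq: "p \<in> ext_L X u" "q \<in> ext_L X u"
      by (simp_all add: doubleton_in_GL_iff)
    have "Inl p \<in> ext_vertices X u" "Inl q \<in> ext_vertices X u"
      using pq unfolding ext_vertices_def by auto
    then have "(Inl p, Inl q) \<in> (adj (ext_edges X u))\<^sup>*"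
      using trees u unfolding sgraph_connected_def by blast
    then show "(p, q) \<in> (adj_avoiding (GL X (Suc n)) {})\<^sup>*"
      using ext_path_iff_GL_Suc_path[OF sep u pq, of "{}"] by simp
  qed
  then have "(adj_avoiding (GL X n) {})\<^sup>* \<subseteq> (adj_avoiding (GL X (Suc n)) {})\<^sup>*"
    by (rule rtrancl_subset_rtrancl)
  then show ?thesis using conn unfolding mgraph_connected_iff by blast
qed

lemma ext_graph_cycle_right_vertex:
  assumes "sgraph_cycle (ext_edges X u) vs"
  obtains b where "Inr b \<in> set vs"
proof -
  have len: "1 < length vs"
    and edges: "\<forall>i < length vs. {vs ! i, vs ! ((i + 1) mod length vs)} \<in> ext_edges X u"
    using assms unfolding sgraph_cycle_def by auto
  then have "{vs ! 0, vs ! 1} \<in> ext_edges X u" using edges[rule_format, of 0] by fastforce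
  moreover have "vs ! 0 \<in> set vs" "vs ! 1 \<in> set vs" using len by (auto intro!: nth_mem)
  ultimately show ?thesis using that by (auto simp: doubleton_in_ext_edges_iff)
qed

lemma ext_graph_acyclic_of_GL_Suc:
  assumes sep: "label_separated (GL X n)" and sepS: "label_separated (GL X (Suc n))"
    and u: "u \<in> lang_n X n"
  shows "\<not> sgraph_has_cycle (ext_edges X u)"
proof
  assume "sgraph_has_cycle (ext_edges X u)"
  then obtain vs where cyc: "sgraph_cycle (ext_edges X u) vs" unfolding sgraph_has_cycle_iff by blast
  then obtain b where "Inr b \<in> set vs" by (rule ext_graph_cycle_right_vertex)
  then obtain x' y' where "x' \<noteq> y'" "{Inr b, x'} \<in> ext_edges X u" "{y', Inr b} \<in> ext_edges X u"
    and path: "(x', y') \<in> (adj (ext_edges_avoiding X u {b}))\<^sup>*"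
    using sgraph_cycle_path_around[OF cyc] unfolding ext_edges_avoiding_singleton by blast
  then obtain x y where xy: "x' = Inl x" "y' = Inl y" "x \<noteq> y"
    and lang: "x # u @ [b] \<in> lang X" "y # u @ [b] \<in> lang X"
    by (auto simp: doubleton_in_ext_edges_iff)
  then have "x \<in> ext_L X u" "y \<in> ext_L X u" using lang_snocD[of "_ # u"] unfolding ext_L_def by auto
  then have "(x, y) \<in> (adj_avoiding (GL X (Suc n)) {u @ [b]})\<^sup>*"
    using ext_path_iff_GL_Suc_path[OF sep u, of x y "{b}"] path xy by simp
  moreover have "(u @ [b], {x, y}) \<in> GL X (Suc n)"
    using lang xy u lang_ConsD[of x "u @ [b]"] unfolding doubleton_in_GL_iff lang_n_def ext_L_def by auto
  ultimately show False using sepS xy unfolding label_separated_def by blast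
qed

lemma GL_Suc_label_separated_of_ext_graphs:
  assumes sep: "label_separated (GL X n)"
    and acyc: "\<forall>u \<in> lang_n X n. \<not> sgraph_has_cycle (ext_edges X u)"
  shows "label_separated (GL X (Suc n))"
  unfolding label_separated_def
proof (intro allI impI notI)
  fix w x y
  assume e: "(w, {x, y}) \<in> GL X (Suc n)" and "x \<noteq> y"
    and path: "(x, y) \<in> (adj_avoiding (GL X (Suc n)) {w})\<^sup>*"
  then have wn: "w \<in> lang_n X (Suc n)" and lang: "x # w \<in> lang X" "y # w \<in> lang X"
    by (simp_all add: doubleton_in_GL_iff ext_L_def)
  obtain u b where w: "w = u @ [b]" and u: "u \<in> lang_n X n" using wn by (rule lang_n_Suc_snoc)
  have "x \<in> ext_L X u" "y \<in> ext_L X u"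
    using lang w lang_snocD[of "_ # u"] unfolding ext_L_def by auto
  then have "(Inl x, Inl y) \<in> (adj {e \<in> ext_edges X u. Inr b \<notin> e})\<^sup>*"
    using ext_path_iff_GL_Suc_path[OF sep u, of x y "{b}"] path w
    unfolding ext_edges_avoiding_singleton by simp
  moreover have "Inl x \<noteq> Inl y" using \<open>x \<noteq> y\<close> by simp
  moreover have "{Inr b, Inl x} \<in> ext_edges X u" "{Inl y, Inr b} \<in> ext_edges X u"
    using lang w by (auto simp: doubleton_in_ext_edges_iff)
  ultimately have "sgraph_has_cycle (ext_edges X u)" by (rule sgraph_has_cycle_of_path)
  then show False using acyc u by blast
qed

lemma GL_0:
  assumes "\<forall>a. [a] \<in> lang X"
  shows "label_separated (GL X 0) \<and> mgraph_connected (GL X 0)"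
proof -
  have "X \<noteq> {}" using assms unfolding lang_def by auto
  then have lang0: "lang_n X 0 = {[]}" unfolding lang_n_def lang_def factor_at_def by auto
  then have "adj_avoiding (GL X 0) {[]} = {}" unfolding adj_avoiding_def GL_def by auto
  then have "label_separated (GL X 0)"
    unfolding label_separated_def using lang0 by (auto simp: doubleton_in_GL_iff)
  moreover have "(a, b) \<in> adj_avoiding (GL X 0) {}" if "a \<noteq> b" for a b
    using that assms lang0 unfolding adj_avoiding_def doubleton_in_GL_iff ext_L_def by auto
  then have "mgraph_connected (GL X 0)"
    unfolding mgraph_connected_iff by (metis r_into_rtrancl rtrancl.rtrancl_refl)
  ultimately show ?thesis ..
qed

lemma dendric_iff_lang_n:
  "dendric X \<longleftrightarrow> (\<forall>n. \<forall>u \<in> lang_n X n. is_tree (ext_vertices X u) (ext_edges X u))"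
  unfolding dendric_def lang_n_def by auto

theorem dendric_iff_GL:
  assumes "\<forall>a. [a] \<in> lang X"
  shows "dendric X \<longleftrightarrow> (\<forall>n. acyclic_for_labeling (GL X n) \<and> mgraph_connected (GL X n))"
  unfolding acyclic_for_labeling_GL_iff
proof
  assume "dendric X"
  then have trees: "\<forall>u \<in> lang_n X n. is_tree (ext_vertices X u) (ext_edges X u)" for n
    unfolding dendric_iff_lang_n by blast
  show "\<forall>n. label_separated (GL X n) \<and> mgraph_connected (GL X n)"
  proof
    fix n show "label_separated (GL X n) \<and> mgraph_connected (GL X n)"
    proof (induction n)
      case 0
      then show ?case using GL_0[OF assms] .
    next
      case (Suc n)
      then show ?case
        using trees[of n] GL_Suc_label_separated_of_ext_graphs GL_Suc_connected_of_ext_graphs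
        unfolding is_tree_def by blast
    qed
  qed
next
  assume GL: "\<forall>n. label_separated (GL X n) \<and> mgraph_connected (GL X n)"
  show "dendric X"
    unfolding dendric_iff_lang_n is_tree_def
    using GL ext_graph_acyclic_of_GL_Suc ext_graph_connected_of_GL_Suc by blast
qed

section \<open>Reversal\<close>

definition reversal :: "(int \<Rightarrow> 'a) set \<Rightarrow> (int \<Rightarrow> 'a) set" where
  "reversal X = (\<lambda>x i. x (- i)) ` X"

lemma reversal_reversal [simp]: "reversal (reversal X) = X"
  unfolding reversal_def image_image by simp

lemma factor_at_reflect: "factor_at (\<lambda>i. x (- i)) i n = rev (factor_at x (- i - int n + 1) n)"
proof (rule nth_equalityI)
  fix k assume "k < length (factor_at (\<lambda>i. x (- i)) i n)"
  then have k: "k < n" by simp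
  then have "int (n - Suc k) = int n - 1 - int k" by (simp add: of_nat_diff)
  then show "factor_at (\<lambda>i. x (- i)) i n ! k = rev (factor_at x (- i - int n + 1) n) ! k"
    using k by (simp add: factor_at_def rev_nth algebra_simps)
qed simp

lemma lang_reversal: "w \<in> lang (reversal X) \<longleftrightarrow> rev w \<in> lang X"
proof
  assume "w \<in> lang (reversal X)"
  then obtain x i where "x \<in> X" "w = factor_at (\<lambda>i. x (- i)) i (length w)"
    unfolding in_lang_iff reversal_def by auto
  then have "w = rev (factor_at x (- i - int (length w) + 1) (length w))"
    by (simp add: factor_at_reflect)
  then have "rev w = factor_at x (- i - int (length w) + 1) (length (rev w))"
    by (metis length_rev rev_rev_ident)
  then show "rev w \<in> lang X" using \<open>x \<in> X\<close> unfolding in_lang_iff by blast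
next
  assume "rev w \<in> lang X"
  then obtain x i where "x \<in> X" "rev w = factor_at x i (length w)"
    unfolding in_lang_iff by auto
  then have "w = rev (factor_at x i (length w))" by (metis rev_rev_ident)
  then have "w = factor_at (\<lambda>i. x (- i)) (- i - int (length w) + 1) (length w)"
    by (simp add: factor_at_reflect)
  then show "w \<in> lang (reversal X)" using \<open>x \<in> X\<close> unfolding in_lang_iff reversal_def by blast
qed

lemma ext_L_reversal: "ext_L (reversal X) v = ext_R X (rev v)"
  unfolding ext_L_def ext_R_def lang_reversal by simp

lemma ext_R_reversal: "ext_R (reversal X) v = ext_L X (rev v)"
  unfolding ext_L_def ext_R_def lang_reversal by simp

lemma lang_n_reversal: "w \<in> lang_n (reversal X) n \<longleftrightarrow> rev w \<in> lang_n X n"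
  unfolding lang_n_def lang_reversal by simp

lemma GR_eq_GL_reversal: "GR X n = apfst rev ` GL (reversal X) n"
proof -
  have "(w, e) \<in> GR X n \<longleftrightarrow> (rev w, e) \<in> GL (reversal X) n" for w e
    unfolding GR_def GL_def by (auto simp: ext_L_reversal lang_n_reversal)
  then show ?thesis by (force simp: image_iff)
qed

definition swap_sum :: "'a + 'a \<Rightarrow> 'a + 'a" where
  "swap_sum = case_sum Inr Inl"

lemma swap_sum_simps [simp]: "swap_sum (Inl a) = Inr a" "swap_sum (Inr a) = Inl a"
  by (simp_all add: swap_sum_def)

lemma swap_sum_swap_sum [simp]: "swap_sum (swap_sum z) = z"
  by (cases z) simp_all

lemma swap_sum_image_swap_sum_image [simp]: "swap_sum ` swap_sum ` A = A"
  by (simp add: image_image)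

lemma ext_vertices_reversal: "ext_vertices (reversal X) v = swap_sum ` ext_vertices X (rev v)"
  unfolding ext_vertices_def ext_L_reversal ext_R_reversal by (simp add: image_Un image_image Un_commute)

lemma ext_edges_reversal: "ext_edges (reversal X) v = image swap_sum ` ext_edges X (rev v)"
proof -
  have swap_iff: "e \<in> ext_edges (reversal X) v \<longleftrightarrow> swap_sum ` e \<in> ext_edges X (rev v)" for e
  proof
    assume "e \<in> ext_edges (reversal X) v"
    then obtain a b where "e = {Inl a, Inr b}" "b # rev v @ [a] \<in> lang X"
      unfolding ext_edges_iff lang_reversal by auto
    then show "swap_sum ` e \<in> ext_edges X (rev v)" unfolding ext_edges_iff by auto
  next
    assume "swap_sum ` e \<in> ext_edges X (rev v)"
    then obtain a b where ab: "swap_sum ` e = {Inl b, Inr a}" "b # rev v @ [a] \<in> lang X"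
      unfolding ext_edges_iff by auto
    have "e = swap_sum ` swap_sum ` e" by simp
    also have "\<dots> = {Inl a, Inr b}" unfolding ab(1) by auto
    finally have "e = {Inl a, Inr b}" .
    then show "e \<in> ext_edges (reversal X) v" using ab(2) unfolding ext_edges_iff lang_reversal by auto
  qed
  show ?thesis
  proof (intro set_eqI iffI)
    fix e assume "e \<in> ext_edges (reversal X) v"
    then have "swap_sum ` swap_sum ` e \<in> image swap_sum ` ext_edges X (rev v)"
      unfolding swap_iff by (rule imageI)
    then show "e \<in> image swap_sum ` ext_edges X (rev v)" by simp
  next
    fix e assume "e \<in> image swap_sum ` ext_edges X (rev v)"
    then obtain e' where "e' \<in> ext_edges X (rev v)" "e = swap_sum ` e'" by blast
    then show "e \<in> ext_edges (reversal X) v" unfolding swap_iff by simp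
  qed
qed

lemma dendric_reversal:
  assumes "dendric X"
  shows "dendric (reversal X)"
  unfolding dendric_def
proof
  fix v assume "v \<in> lang (reversal X)"
  then have "is_tree (ext_vertices X (rev v)) (ext_edges X (rev v))"
    using assms unfolding dendric_def lang_reversal by blast
  then show "is_tree (ext_vertices (reversal X) v) (ext_edges (reversal X) v)"
    unfolding ext_vertices_reversal ext_edges_reversal by (rule is_tree_involution_image[rotated]) simp
qed

lemma dendric_reversal_iff: "dendric (reversal X) \<longleftrightarrow> dendric X"
  using dendric_reversal[of X] dendric_reversal[of "reversal X"] by auto

theorem dendric_iff_GR:
  assumes "\<forall>a. [a] \<in> lang X"
  shows "dendric X \<longleftrightarrow> (\<forall>n. acyclic_for_labeling (GR X n) \<and> mgraph_connected (GR X n))"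
proof -
  have "\<forall>a. [a] \<in> lang (reversal X)" using assms by (simp add: lang_reversal)
  then show ?thesis
    using dendric_iff_GL[of "reversal X"]
    by (simp add: dendric_reversal_iff GR_eq_GL_reversal acyclic_for_labeling_relabel
        mgraph_connected_relabel)
qed

theorem mainTheorem7:
  fixes X :: "(int \<Rightarrow> 'a::finite) set"
  assumes "shift_space X"
    and "\<forall>a::'a. [a] \<in> lang X"
  shows "(dendric X \<longleftrightarrow> (\<forall>n. acyclic_for_labeling (GL X n) \<and> mgraph_connected (GL X n)))
       \<and> (dendric X \<longleftrightarrow> (\<forall>n. acyclic_for_labeling (GR X n) \<and> mgraph_connected (GR X n)))"
  using dendric_iff_GL[OF assms(2)] dendric_iff_GR[OF assms(2)] ..

end
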